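(* Let $\mathcal{R},\mathcal{V},\mathcal{R}',\mathcal{V}'$ be finite sets with $|\mathcal{R}|=|\mathcal{R}'|$. For any positive integer $k$, if a released table $\tau'$ on $(\mathcal{R}',\mathcal{V}')$ is $k$-anonymous, then $(\Delta,\tau')$ is $Pk$-anonymous for every privacy mechanism $\Delta=(\mathcal{R},\mathcal{V},\mathcal{R}',\mathcal{V}',\Pi,\Delta)$.
   Context: A table on $(\mathcal{R},\mathcal{V})$ is a map $\mathcal{R}\to\mathcal{V}$; $\mathcal{T}$, $\mathcal{T}'$ denote the sets of tables on $(\mathcal{R},\mathcal{V})$ and $(\mathcal{R}',\mathcal{V}')$. For sets $X,Y$, $X\to Y$ is the set of maps $X\to Y$. A privacy mechanism is $(\mathcal{R},\mathcal{V},\mathcal{R}',\mathcal{V}',\Pi,\Delta)$ with $\Pi$ uniformly distributed over bijections $\mathcal{R}\to\mathcal{R}'$ and $\Delta$ a random variable in $\mathcal{T}\to(\mathcal{R}\to\mathcal{V}')$; it is a privacy mechanism from $T$ to $T'$ (random variables on $\mathcal{T},\mathcal{T}'$) if $T,\Pi,\Delta$ are mutually independent and $\Delta(T)=T'\circ\Pi$. $\tau'$ is $k$-anonymous if for every $r'\in\mathcal{R}'$ there are at least $k$ elements $\hat r'\in\mathcal{R}'$ with $\tau'(\hat r')=\tau'(r')$. $(\Delta,\tau')$ is $Pk$-anonymous (real $k\ge1$) if for all random variables $T,T'$ such that $\Delta$ is a privacy mechanism from $T$ to $T'$ and all $r\in\mathcal{R}$, $r'\in\mathcal{R}'$, $\Pr[\Pi(r)=r'\mid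 T'=\tau']\le1/k$. *)

theory Defs
  imports "HOL-Probability.Probability"
begin

text \<open>Tables on (R,V) are maps R \<Rightarrow> V; the finite sets R,V,R',V' are finite types.
  All random variables live on one probability space M with sample type 'w.\<close>

definition random_var :: "'w measure \<Rightarrow> ('w \<Rightarrow> 'a) \<Rightarrow> bool" where
  "random_var M X \<longleftrightarrow> X \<in> measurable M (count_space UNIV)"

definition privacy_mechanism ::
  "'w measure \<Rightarrow> ('w \<Rightarrow> ('r::finite \<Rightarrow> 'r2::finite)) \<Rightarrow> ('w \<Rightarrow> (('r \<Rightarrow> 'v::finite) \<Rightarrow> ('r \<Rightarrow> 'v2::finite))) \<Rightarrow> bool" where
  "privacy_mechanism M Pm Dl \<longleftrightarrow>
     prob_space M \<and> random_var M Pm \<and> random_var M Dl \<and>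
     (\<forall>\<pi>. measure M {\<omega> \<in> space M. Pm \<omega> = \<pi>} =
            (if bij \<pi> then 1 / real (card {\<sigma>::'r \<Rightarrow> 'r2. bij \<sigma>}) else 0))"

definition mechanism_from ::
  "'w measure \<Rightarrow> ('w \<Rightarrow> ('r::finite \<Rightarrow> 'r2::finite)) \<Rightarrow> ('w \<Rightarrow> (('r \<Rightarrow> 'v::finite) \<Rightarrow> ('r \<Rightarrow> 'v2::finite)))
    \<Rightarrow> ('w \<Rightarrow> ('r \<Rightarrow> 'v)) \<Rightarrow> ('w \<Rightarrow> ('r2 \<Rightarrow> 'v2)) \<Rightarrow> bool" where
  "mechanism_from M Pm Dl T T' \<longleftrightarrow>
     random_var M T \<and> random_var M T' \<and>
     (\<forall>A B C. measure M {\<omega> \<in> space M. T \<omega> \<in> A \<and> Pm \<omega> \<in> B \<and> Dl \<omega> \<in> C} =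
        measure M {\<omega> \<in> space M. T \<omega> \<in> A} * measure M {\<omega> \<in> space M. Pm \<omega> \<in> B}
          * measure M {\<omega> \<in> space M. Dl \<omega> \<in> C}) \<and>
     (\<forall>\<omega> \<in> space M. Dl \<omega> (T \<omega>) = T' \<omega> \<circ> Pm \<omega>)"

text \<open>Conditional probability Pr[A | B] = Pr[A \<inter> B] / Pr[B] (equal to 0 if Pr[B] = 0).\<close>
definition cond_prob :: "'w measure \<Rightarrow> ('w \<Rightarrow> bool) \<Rightarrow> ('w \<Rightarrow> bool) \<Rightarrow> real" where
  "cond_prob M P Q = measure M {\<omega> \<in> space M. P \<omega> \<and> Q \<omega>} / measure M {\<omega> \<in> space M. Q \<omega>}"

definition k_anonymous :: "('r2::finite \<Rightarrow> 'v2) \<Rightarrow> nat \<Rightarrow> bool" where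
  "k_anonymous \<tau>' k \<longleftrightarrow> (\<forall>r'. card {r''. \<tau>' r'' = \<tau>' r'} \<ge> k)"

definition Pk_anonymous ::
  "'w measure \<Rightarrow> ('w \<Rightarrow> ('r::finite \<Rightarrow> 'r2::finite)) \<Rightarrow> ('w \<Rightarrow> (('r \<Rightarrow> 'v::finite) \<Rightarrow> ('r \<Rightarrow> 'v2::finite)))
    \<Rightarrow> ('r2 \<Rightarrow> 'v2) \<Rightarrow> real \<Rightarrow> bool" where
  "Pk_anonymous M Pm Dl \<tau>' k \<longleftrightarrow>
     (\<forall>(T :: 'w \<Rightarrow> ('r \<Rightarrow> 'v)) (T' :: 'w \<Rightarrow> ('r2 \<Rightarrow> 'v2)). mechanism_from M Pm Dl T T' \<longrightarrow>
        (\<forall>r r'. cond_prob M (\<lambda>\<omega>. Pm \<omega> r = r') (\<lambda>\<omega>. T' \<omega> = \<tau>') \<le> 1 / k))"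

end

theory Submission
  imports Defs
begin

text \<open>Any r'' with \<open>\<tau>' r'' = \<tau>' r'\<close> is exchanged with r' by the transposition
  \<open>\<sigma> = (r' r'')\<close>, which satisfies \<open>\<tau>' \<circ> \<sigma> = \<tau>'\<close>. Replacing \<Pi> by \<open>\<sigma> \<circ> \<Pi>\<close> preserves the uniform law of
  \<Pi>, hence, by independence, the joint law of (T, \<Pi>, \<Delta>). Outside the null event that \<Pi> is not
  bijective, \<open>\<Pi> r = r'' \<and> T' = \<tau>'\<close> is an event of (T, \<Pi>, \<Delta>) because \<open>\<Delta>(T) = T' \<circ> \<Pi>\<close>, and the
  relabelling turns it into \<open>\<Pi> r = r' \<and> T' = \<tau>'\<close>. So at least k disjoint events inside \<open>T' = \<tau>'\<close>
  share the probability of \<open>\<Pi> r = r' \<and> T' = \<tau>'\<close>, which is thus at most \<open>Pr[T' = \<tau>'] / k\<close>.\<close>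

lemma random_var_Collect_sets:
  "random_var M X \<Longrightarrow> {\<omega> \<in> space M. P (X \<omega>)} \<in> sets M"
  using measurable_sets[of X M "count_space UNIV" "{x. P x}"]
  by (simp add: random_var_def vimage_def Int_def conj_commute)

lemma random_var_pair:
  fixes X :: "'w \<Rightarrow> 'a::countable" and Y :: "'w \<Rightarrow> 'b::countable"
  assumes "random_var M X" "random_var M Y"
  shows "random_var M (\<lambda>\<omega>. (X \<omega>, Y \<omega>))"
  unfolding random_var_def measurable_count_space_eq2_countable
proof (intro conjI ballI)
  fix a :: "'a \<times> 'b"
  have "(\<lambda>\<omega>. (X \<omega>, Y \<omega>)) -` {a} \<inter> space M
      = {\<omega> \<in> space M. X \<omega> = fst a} \<inter> {\<omega> \<in> space M. Y \<omega> = snd a}"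
    by (auto simp: prod_eq_iff)
  moreover have "{\<omega> \<in> space M. X \<omega> = fst a} \<inter> {\<omega> \<in> space M. Y \<omega> = snd a} \<in> sets M"
    using random_var_Collect_sets[OF assms(1), of "\<lambda>x. x = fst a"]
      random_var_Collect_sets[OF assms(2), of "\<lambda>y. y = snd a"] by (rule sets.Int)
  ultimately show "(\<lambda>\<omega>. (X \<omega>, Y \<omega>)) -` {a} \<inter> space M \<in> sets M" by simp
qed simp

lemma (in prob_space) prob_random_var_in_finite:
  assumes "random_var M X" "finite A"
  shows "prob {\<omega> \<in> space M. X \<omega> \<in> A} = (\<Sum>x\<in>A. prob {\<omega> \<in> space M. X \<omega> = x})"
proof -
  have "{\<omega> \<in> space M. X \<omega> \<in> A} = (\<Union>x\<in>A. {\<omega> \<in> space M. X \<omega> = x})" by auto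
  moreover have "prob (\<Union>x\<in>A. {\<omega> \<in> space M. X \<omega> = x}) = (\<Sum>x\<in>A. prob {\<omega> \<in> space M. X \<omega> = x})"
    using assms by (intro measure_finite_Union)
      (auto simp: disjoint_family_on_def intro: random_var_Collect_sets)
  ultimately show ?thesis by simp
qed

lemma (in prob_space) prob_random_var_null:
  fixes X :: "'a \<Rightarrow> 'b::finite"
  assumes "random_var M X" "\<And>x. \<not> S x \<Longrightarrow> prob {\<omega> \<in> space M. X \<omega> = x} = 0"
  shows "{\<omega> \<in> space M. \<not> S (X \<omega>)} \<in> null_sets M"
proof -
  have "prob {\<omega> \<in> space M. \<not> S (X \<omega>)} = 0"
    using prob_random_var_in_finite[OF assms(1), of "{x. \<not> S x}"] assms(2) by simp
  then show ?thesis
    using random_var_Collect_sets[OF assms(1)] by (simp add: null_sets_def emeasure_eq_measure)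
qed

lemma (in prob_space) prob_independent_relabel:
  fixes T :: "'a \<Rightarrow> 'b::finite" and P :: "'a \<Rightarrow> 'c::finite" and D :: "'a \<Rightarrow> 'd::finite"
  assumes rv: "random_var M T" "random_var M P" "random_var M D"
    and indep: "\<And>a b c. prob {\<omega> \<in> space M. T \<omega> = a \<and> P \<omega> = b \<and> D \<omega> = c} =
      prob {\<omega> \<in> space M. T \<omega> = a} * prob {\<omega> \<in> space M. P \<omega> = b} * prob {\<omega> \<in> space M. D \<omega> = c}"
    and "bij g" and invariant: "\<And>b. prob {\<omega> \<in> space M. P \<omega> = g b} = prob {\<omega> \<in> space M. P \<omega> = b}"
  shows "prob {\<omega> \<in> space M. Q (T \<omega>) (g (P \<omega>)) (D \<omega>)} = prob {\<omega> \<in> space M. Q (T \<omega>) (P \<omega>) (D \<omega>)}"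
proof -
  define F where "F \<omega> = (T \<omega>, P \<omega>, D \<omega>)" for \<omega>
  define G :: "'b \<times> 'c \<times> 'd \<Rightarrow> 'b \<times> 'c \<times> 'd" where "G = (\<lambda>(a, b, c). (a, g b, c))"
  define Q' where "Q' = (\<lambda>(a, b, c). Q a b c)"
  define h where "h x = prob {\<omega> \<in> space M. F \<omega> = x}" for x
  have rvF: "random_var M F" unfolding F_def by (intro random_var_pair rv)
  have hG: "h (G x) = h x" for x
    by (cases x) (simp add: h_def F_def G_def indep invariant)
  define G' :: "'b \<times> 'c \<times> 'd \<Rightarrow> 'b \<times> 'c \<times> 'd" where "G' = (\<lambda>(a, b, c). (a, inv g b, c))"
  have G'G: "G' (G x) = x" and GG': "G (G' x) = x" for x
    using \<open>bij g\<close> by (auto simp: G_def G'_def bij_def surj_f_inv_f split: prod.split)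
  have "prob {\<omega> \<in> space M. Q (T \<omega>) (g (P \<omega>)) (D \<omega>)} = prob {\<omega> \<in> space M. F \<omega> \<in> {x. Q' (G x)}}"
    by (simp add: F_def G_def Q'_def)
  also have "\<dots> = (\<Sum>x | Q' (G x). h x)"
    using prob_random_var_in_finite[OF rvF, of "{x. Q' (G x)}"] by (simp add: h_def)
  also have "\<dots> = (\<Sum>x | Q' (G x). h (G x))"
    by (simp add: hG)
  also have "\<dots> = sum h {x. Q' x}"
    by (rule sum.reindex_bij_witness[where i = G' and j = G]) (auto simp: G'G GG')
  also have "\<dots> = prob {\<omega> \<in> space M. Q (T \<omega>) (P \<omega>) (D \<omega>)}"
    using prob_random_var_in_finite[OF rvF, of "{x. Q' x}"] by (simp add: h_def F_def Q'_def)
  finally show ?thesis .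
qed

lemma privacy_mechanism_nonbij_null:
  assumes "privacy_mechanism M Pm Dl"
  shows "{\<omega> \<in> space M. \<not> bij (Pm \<omega>)} \<in> null_sets M"
proof -
  interpret prob_space M using assms by (simp add: privacy_mechanism_def)
  show ?thesis
    using assms by (intro prob_random_var_null[of Pm bij]) (auto simp: privacy_mechanism_def)
qed

lemma bij_comp_cancel_right:
  "bij \<pi> \<Longrightarrow> f \<circ> \<pi> = g \<circ> \<pi> \<longleftrightarrow> f = g"
  by (metis bij_is_surj surj_fun_eq)

lemma release_event_sets:
  fixes Pm :: "'w \<Rightarrow> 'a::finite \<Rightarrow> 'b::finite" and T' :: "'w \<Rightarrow> 'c::countable"
  assumes "random_var M Pm" "random_var M T'"
  shows "{\<omega> \<in> space M. Pm \<omega> r = s \<and> T' \<omega> = \<tau>'} \<in> sets M"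
proof -
  have "random_var M (\<lambda>\<omega>. (Pm \<omega>, T' \<omega>))"
    using assms by (rule random_var_pair)
  from random_var_Collect_sets[OF this, of "\<lambda>(\<pi>, t). \<pi> r = s \<and> t = \<tau>'"] show ?thesis by simp
qed

lemma mechanism_release_event:
  fixes Pm :: "'w \<Rightarrow> ('r::finite \<Rightarrow> 'r2::finite)"
    and Dl :: "'w \<Rightarrow> (('r \<Rightarrow> 'v::finite) \<Rightarrow> ('r \<Rightarrow> 'v2::finite))"
  assumes "privacy_mechanism M Pm Dl" "mechanism_from M Pm Dl T T'"
  shows "measure M {\<omega> \<in> space M. Pm \<omega> r = s \<and> T' \<omega> = \<tau>'} =
    measure M {\<omega> \<in> space M. bij (Pm \<omega>) \<and> Pm \<omega> r = s \<and> Dl \<omega> (T \<omega>) = \<tau>' \<circ> Pm \<omega>}"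
proof -
  have "{\<omega> \<in> space M. bij (Pm \<omega>) \<and> Pm \<omega> r = s \<and> Dl \<omega> (T \<omega>) = \<tau>' \<circ> Pm \<omega>} =
      {\<omega> \<in> space M. Pm \<omega> r = s \<and> T' \<omega> = \<tau>'} - {\<omega> \<in> space M. \<not> bij (Pm \<omega>)}"
    using assms(2) by (auto simp: mechanism_from_def bij_comp_cancel_right)
  moreover have "{\<omega> \<in> space M. Pm \<omega> r = s \<and> T' \<omega> = \<tau>'} \<in> sets M"
    using assms by (intro release_event_sets) (simp_all add: privacy_mechanism_def mechanism_from_def)
  ultimately show ?thesis
    using privacy_mechanism_nonbij_null[OF assms(1)] by (simp add: measure_Diff_null_set)
qed

lemma mechanism_swap_equiprobable:
  fixes Pm :: "'w \<Rightarrow> ('r::finite \<Rightarrow> 'r2::finite)"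
    and Dl :: "'w \<Rightarrow> (('r \<Rightarrow> 'v::finite) \<Rightarrow> ('r \<Rightarrow> 'v2::finite))"
  assumes pm: "privacy_mechanism M Pm Dl" and mf: "mechanism_from M Pm Dl T T'"
    and "\<tau>' s = \<tau>' r'"
  shows "measure M {\<omega> \<in> space M. Pm \<omega> r = s \<and> T' \<omega> = \<tau>'} =
    measure M {\<omega> \<in> space M. Pm \<omega> r = r' \<and> T' \<omega> = \<tau>'}"
proof -
  interpret prob_space M using pm by (simp add: privacy_mechanism_def)
  define \<sigma> where "\<sigma> = Transposition.transpose r' s"
  have \<sigma>\<sigma>: "\<sigma> \<circ> \<sigma> = id" by (simp add: \<sigma>_def)
  have bij_\<sigma>_comp: "bij (\<sigma> \<circ> \<pi>) \<longleftrightarrow> bij \<pi>" for \<pi> :: "'r \<Rightarrow> 'r2"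
    by (metis \<sigma>\<sigma> bij_comp comp_assoc id_comp o_bij)
  have \<tau>'\<sigma>: "\<tau>' \<circ> \<sigma> = \<tau>'"
    using assms(3) by (auto simp: \<sigma>_def Transposition.transpose_def)
  have rv: "random_var M T" "random_var M Pm" "random_var M Dl"
    using pm mf by (simp_all add: privacy_mechanism_def mechanism_from_def)
  have indep: "prob {\<omega> \<in> space M. T \<omega> = t \<and> Pm \<omega> = \<pi> \<and> Dl \<omega> = d} =
      prob {\<omega> \<in> space M. T \<omega> = t} * prob {\<omega> \<in> space M. Pm \<omega> = \<pi>} * prob {\<omega> \<in> space M. Dl \<omega> = d}"
    for t \<pi> d
    using mf[unfolded mechanism_from_def, THEN conjunct2, THEN conjunct2, THEN conjunct1,
        rule_format, of "{t}" "{\<pi>}" "{d}"]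
    by simp
  have "bij ((\<circ>) \<sigma>)"
    by (rule o_bij[where g = "(\<circ>) \<sigma>"]) (simp_all add: fun_eq_iff comp_assoc[symmetric] \<sigma>\<sigma>)
  moreover have "prob {\<omega> \<in> space M. Pm \<omega> = \<sigma> \<circ> \<pi>} = prob {\<omega> \<in> space M. Pm \<omega> = \<pi>}" for \<pi>
    using pm by (simp add: privacy_mechanism_def bij_\<sigma>_comp)
  ultimately have "prob {\<omega> \<in> space M. bij (\<sigma> \<circ> Pm \<omega>) \<and> (\<sigma> \<circ> Pm \<omega>) r = r' \<and> Dl \<omega> (T \<omega>) = \<tau>' \<circ> (\<sigma> \<circ> Pm \<omega>)} =
      prob {\<omega> \<in> space M. bij (Pm \<omega>) \<and> Pm \<omega> r = r' \<and> Dl \<omega> (T \<omega>) = \<tau>' \<circ> Pm \<omega>}"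
    by (rule prob_independent_relabel[OF rv indep, where Q = "\<lambda>t \<pi> d. bij \<pi> \<and> \<pi> r = r' \<and> d t = \<tau>' \<circ> \<pi>"])
  moreover have "(\<sigma> \<circ> \<pi>) r = r' \<longleftrightarrow> \<pi> r = s" for \<pi> :: "'r \<Rightarrow> 'r2"
    by (auto simp: \<sigma>_def Transposition.transpose_def)
  ultimately show ?thesis
    using mechanism_release_event[OF pm mf] by (simp add: bij_\<sigma>_comp comp_assoc[symmetric] \<tau>'\<sigma>)
qed

lemma (in prob_space) card_mult_prob_le:
  assumes "finite K" "disjoint_family_on E K" "\<And>i. i \<in> K \<Longrightarrow> E i \<in> events"
    and "\<And>i. i \<in> K \<Longrightarrow> E i \<subseteq> B" "B \<in> events" "\<And>i. i \<in> K \<Longrightarrow> prob (E i) = p"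
  shows "real (card K) * p \<le> prob B"
proof -
  have "real (card K) * p = (\<Sum>i\<in>K. prob (E i))" using assms(6) by simp
  also have "\<dots> = prob (\<Union>i\<in>K. E i)" using assms by (intro measure_finite_Union[symmetric]) auto
  also have "\<dots> \<le> prob B" using assms by (intro finite_measure_mono) auto
  finally show ?thesis .
qed

theorem lemma1:
  fixes M :: "'w measure"
    and Pm :: "'w \<Rightarrow> ('r::finite \<Rightarrow> 'r2::finite)"
    and Dl :: "'w \<Rightarrow> (('r \<Rightarrow> 'v::finite) \<Rightarrow> ('r \<Rightarrow> 'v2::finite))"
    and \<tau>' :: "'r2 \<Rightarrow> 'v2"
    and k :: nat
  assumes "CARD('r) = CARD('r2)"
    and "k > 0"
    and "privacy_mechanism M Pm Dl"
    and "k_anonymous \<tau>' k"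
  shows "Pk_anonymous M Pm Dl \<tau>' (real k)"
  unfolding Pk_anonymous_def
proof (intro allI impI)
  interpret prob_space M using assms(3) by (simp add: privacy_mechanism_def)
  fix T T' r r'
  assume mf: "mechanism_from M Pm Dl T T'"
  define E where "E s = {\<omega> \<in> space M. Pm \<omega> r = s \<and> T' \<omega> = \<tau>'}" for s
  define B where "B = {\<omega> \<in> space M. T' \<omega> = \<tau>'}"
  define K where "K = {s. \<tau>' s = \<tau>' r'}"
  have rv: "random_var M Pm" "random_var M T'"
    using assms(3) mf by (simp_all add: privacy_mechanism_def mechanism_from_def)
  have "real (card K) * prob (E r') \<le> prob B"
  proof (rule card_mult_prob_le)
    show "disjoint_family_on E K" by (auto simp: disjoint_family_on_def E_def)
    show "E s \<in> events" for s unfolding E_def using rv by (rule release_event_sets)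
    show "B \<in> events" unfolding B_def using rv(2) by (rule random_var_Collect_sets)
    show "E s \<subseteq> B" for s by (auto simp: E_def B_def)
    show "prob (E s) = prob (E r')" if "s \<in> K" for s
      unfolding E_def by (rule mechanism_swap_equiprobable[OF assms(3) mf]) (use that in \<open>simp add: K_def\<close>)
  qed simp
  moreover have "real k * prob (E r') \<le> real (card K) * prob (E r')"
    using assms(4) by (intro mult_right_mono) (simp_all add: k_anonymous_def K_def)
  ultimately have kE: "real k * prob (E r') \<le> prob B" by linarith
  have "prob (E r') / prob B \<le> 1 / real k"
  proof (cases "prob B = 0")
    case False
    then have "prob B > 0" using measure_nonneg[of M B] by linarith
    with kE \<open>k > 0\<close> show ?thesis by (simp add: divide_simps mult.commute)
  qed simp
  then show "cond_prob M (\<lambda>\<omega>. Pm \<omega> r = r') (\<lambda>\<omega>. T' \<omega> = \<tau>') \<le> 1 / real k"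
    by (simp add: cond_prob_def E_def B_def)
qed

end
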